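(* Let $G$ be a connected graph with $n$ vertices and matching number $k$, where $2\le k\le\lfloor n/2\rfloor$. If $4\le n\le 6$ and $k=\lfloor n/2\rfloor$, then $\sigma_2(G)\ge\binom n2$, with equality if and only if $G=K_n$. Otherwise, $\sigma_2(G)\ge 2n+4k-6$, with equality if and only if $G=K_1\vee\big((k-1)K_2+\overline{K}_{n+1-2k}\big)$.
   Context: All graphs are finite, simple, undirected. For a connected graph $G$ and $u\in V(G)$, $\varepsilon_G(u)=\max_v d_G(u,v)$, and $\sigma_2(G)=\sum_{uv\in E(G)}\varepsilon_G(u)\varepsilon_G(v)$. The matching number is the maximum number of pairwise disjoint edges. $K_r$ is the complete graph, $\overline{K}_r$ the edgeless graph on $r$ vertices, $(k-1)K_2$ is a disjoint union of $k-1$ edges; $G+H$ is the disjoint union and $G\vee H$ (the join) is obtained from $G+H$ by adding all edges between $V(G)$ and $V(H)$. *)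

theory Defs
  imports Main
begin

definition simple_graph :: "'a set \<Rightarrow> ('a \<Rightarrow> 'a \<Rightarrow> bool) \<Rightarrow> bool" where
  "simple_graph V E \<longleftrightarrow> finite V \<and>
     (\<forall>u v. E u v \<longrightarrow> u \<in> V \<and> v \<in> V \<and> u \<noteq> v \<and> E v u)"

definition connected_graph :: "'a set \<Rightarrow> ('a \<Rightarrow> 'a \<Rightarrow> bool) \<Rightarrow> bool" where
  "connected_graph V E \<longleftrightarrow> V \<noteq> {} \<and> (\<forall>u\<in>V. \<forall>v\<in>V. \<exists>m. (E ^^ m) u v)"

definition dist :: "('a \<Rightarrow> 'a \<Rightarrow> bool) \<Rightarrow> 'a \<Rightarrow> 'a \<Rightarrow> nat" where
  "dist E u v = (LEAST m. (E ^^ m) u v)"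

definition ecc :: "'a set \<Rightarrow> ('a \<Rightarrow> 'a \<Rightarrow> bool) \<Rightarrow> 'a \<Rightarrow> nat" where
  "ecc V E u = Max (dist E u ` V)"

definition edges :: "('a \<Rightarrow> 'a \<Rightarrow> bool) \<Rightarrow> 'a set set" where
  "edges E = {{u, v} | u v. E u v}"

definition sigma2 :: "'a set \<Rightarrow> ('a \<Rightarrow> 'a \<Rightarrow> bool) \<Rightarrow> nat" where
  "sigma2 V E = (\<Sum>e\<in>edges E. \<Prod>x\<in>e. ecc V E x)"

definition is_matching :: "('a \<Rightarrow> 'a \<Rightarrow> bool) \<Rightarrow> 'a set set \<Rightarrow> bool" where
  "is_matching E M \<longleftrightarrow> M \<subseteq> edges E \<and> (\<forall>e1\<in>M. \<forall>e2\<in>M. e1 \<noteq> e2 \<longrightarrow> e1 \<inter> e2 = {})"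

definition matching_number :: "('a \<Rightarrow> 'a \<Rightarrow> bool) \<Rightarrow> nat" where
  "matching_number E = Max {card M | M. is_matching E M}"

definition graph_iso :: "'a set \<Rightarrow> ('a \<Rightarrow> 'a \<Rightarrow> bool) \<Rightarrow> 'b set \<Rightarrow> ('b \<Rightarrow> 'b \<Rightarrow> bool) \<Rightarrow> bool" where
  "graph_iso V E W F \<longleftrightarrow> (\<exists>f. bij_betw f V W \<and> (\<forall>u\<in>V. \<forall>v\<in>V. E u v \<longleftrightarrow> F (f u) (f v)))"

definition complete_adj :: "nat \<Rightarrow> nat \<Rightarrow> nat \<Rightarrow> bool" where
  "complete_adj n u v \<longleftrightarrow> u < n \<and> v < n \<and> u \<noteq> v"

text \<open>K_1 join ((k-1)K_2 + edgeless graph on n+1-2k vertices), on vertex set {0..<n}: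
  vertex 0 is the K_1; vertices 2i-1, 2i (1 <= i <= k-1) form the copies of K_2;
  vertices 2k-1, ..., n-1 are the isolated vertices of the edgeless part.\<close>
definition join_adj :: "nat \<Rightarrow> nat \<Rightarrow> nat \<Rightarrow> nat \<Rightarrow> bool" where
  "join_adj n k u v \<longleftrightarrow> u < n \<and> v < n \<and> u \<noteq> v \<and>
     (u = 0 \<or> v = 0 \<or>
      (1 \<le> u \<and> u \<le> 2*k - 2 \<and> 1 \<le> v \<and> v \<le> 2*k - 2 \<and> (u + 1) div 2 = (v + 1) div 2))"

end

theory Submission
  imports Defs
begin

text \<open>
  Let D be the set of dominating vertices (adjacent to all others), R the rest, d = |D|,
  r = |R|, and s twice the number of edges inside R. If D is empty, every eccentricity is at
  least 2 and a connected graph has at least n - 1 edges, so sigma_2 \<ge> 4(n - 1). Otherwise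
  vertices of D have eccentricity 1 and those of R eccentricity 2, so
  2 sigma_2 = d(d - 1) + 4dr + 4s. A maximum matching has at most d edges meeting D, hence at
  least k - d edges inside R, giving s \<ge> 2(k - d); and if d > k then n \<le> 2k + 1, as otherwise
  k + 1 dominating vertices could be matched. Equality forces D = V (the complete graph) in the small cases, and otherwise d = 1
  with the edges inside R forming exactly k - 1 disjoint pairs, which is the graph
  K_1 \<or> ((k - 1)K_2 + n+1-2k isolated vertices).
\<close>

section \<open>Integer estimates\<close>

lemma two_mul_choose_two: "2 * (n choose 2) = n * (n - 1)"
proof -
  have "even (n * (n - 1))" by (cases "even n") auto
  then show ?thesis by (simp add: choose_two)
qed

lemma sigma2_arith_small:
  fixes d r s k x :: int
  assumes "0 \<le> d" "0 \<le> r" "0 \<le> s" "4 \<le> d + r" "d + r \<le> 6" "k = (d + r) div 2"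
    and "2 * (k - d) \<le> s"
    and "d = 0 \<Longrightarrow> 8 * (d + r - 1) \<le> x"
    and "1 \<le> d \<Longrightarrow> x = d * (d - 1) + 4 * d * r + 4 * s"
  shows "(d + r) * (d + r - 1) \<le> x" and "x = (d + r) * (d + r - 1) \<Longrightarrow> r = 0"
proof -
  have "d \<in> {0..6}" "r \<in> {0..6}" using assms(1,2,5) by auto
  then have cases: "d \<in> {0,1,2,3,4,5,6}" "r \<in> {0,1,2,3,4,5,6}" by auto
  show "(d + r) * (d + r - 1) \<le> x" and "x = (d + r) * (d + r - 1) \<Longrightarrow> r = 0"
    using cases assms by auto
qed

lemma sigma2_arith_large:
  fixes d r s k x :: int
  defines "n \<equiv> d + r"
  assumes "0 \<le> d" "0 \<le> r" "0 \<le> s" "2 \<le> k" "2 * k \<le> n" "\<not> (n \<le> 6 \<and> k = n div 2)"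
    and "2 * (k - d) \<le> s" and "k + 1 \<le> d \<Longrightarrow> n \<le> 2 * k + 1"
    and "d = 0 \<Longrightarrow> 8 * (n - 1) \<le> x"
    and "1 \<le> d \<Longrightarrow> x = d * (d - 1) + 4 * d * r + 4 * s"
  shows "4 * n + 8 * k - 12 \<le> x" and "x = 4 * n + 8 * k - 12 \<Longrightarrow> d = 1 \<and> s = 2 * (k - 1)"
proof -
  have n6: "6 \<le> n" using assms(5,6,7) by linarith
  consider "d = 0" | "d = 1" | "2 \<le> d" "d \<le> k" | "k + 1 \<le> d" using assms(2) by linarith
  then have "4 * n + 8 * k - 12 < x \<or> (d = 1 \<and> x = 4 * n + 8 * k - 12 + 4 * (s - 2 * (k - 1)))"
  proof cases
    case 1
    then have "8 * (n - 1) \<le> x" by (rule assms(10))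
    then show ?thesis using assms(6) by (simp add: algebra_simps)
  next
    case 2
    then show ?thesis using assms(11) n_def by (simp add: algebra_simps)
  next
    case 3
    have "0 < (d - 1) * (4 * n - 3 * d - 12)" using 3 n6 assms(6) by (intro mult_pos_pos) linarith+
    then show ?thesis using 3 assms(8,11) n_def by (simp add: algebra_simps)
  next
    case 4
    then have "k = n div 2" using assms(6,9) by presburger
    then have n7: "7 \<le> n" using n6 assms(7) by linarith
    have "0 \<le> r * (2 * d - r + 1)" using 4 assms(3,6,9) n_def by simp
    moreover have "4 * n + 8 * k - 12 < n * (n - 1)"
    proof (cases "n = 7")
      case True
      then show ?thesis using assms(6) by presburger
    next
      case False
      then have "0 \<le> (n - 8) * (n - 1)" using n7 by simp
      then show ?thesis using assms(6) by (simp add: algebra_simps)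
    qed
    ultimately show ?thesis using 4 assms(4,5,11) n_def by (simp add: algebra_simps)
  qed
  then show "4 * n + 8 * k - 12 \<le> x" and "x = 4 * n + 8 * k - 12 \<Longrightarrow> d = 1 \<and> s = 2 * (k - 1)"
    using assms(8) by auto
qed

section \<open>Labelling vertex sets by intervals\<close>

lemma pairs_labelling_insert:
  fixes f :: "'a \<Rightarrow> nat"
  assumes f: "bij_betw f (\<Union>P) {0..<2 * m}"
    and same: "\<forall>u\<in>\<Union>P. \<forall>v\<in>\<Union>P. (\<exists>e\<in>P. u \<in> e \<and> v \<in> e) \<longleftrightarrow> f u div 2 = f v div 2"
    and ab: "a \<noteq> b" "a \<notin> \<Union>P" "b \<notin> \<Union>P"
  defines "g \<equiv> f(a := 2 * m, b := 2 * m + 1)"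
  shows "bij_betw g (\<Union>(insert {a, b} P)) {0..<2 * m + 2}"
    and "\<forall>u\<in>\<Union>(insert {a, b} P). \<forall>v\<in>\<Union>(insert {a, b} P).
      (\<exists>e\<in>insert {a, b} P. u \<in> e \<and> v \<in> e) \<longleftrightarrow> g u div 2 = g v div 2"
proof -
  have "bij_betw g (\<Union>P) {0..<2 * m} = bij_betw f (\<Union>P) {0..<2 * m}"
    by (rule bij_betw_cong) (use ab in \<open>auto simp: g_def\<close>)
  then have g_old: "bij_betw g (\<Union>P) {0..<2 * m}" using f by simp
  have "bij_betw g (\<Union>P \<union> {a, b}) ({0..<2 * m} \<union> {2 * m, 2 * m + 1})"
    using ab by (intro bij_betw_combine[OF g_old]) (auto simp: g_def bij_betw_def)
  moreover have "{0..<2 * m} \<union> {2 * m, 2 * m + 1} = {0..<2 * m + 2}" by auto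
  ultimately show "bij_betw g (\<Union>(insert {a, b} P)) {0..<2 * m + 2}" by (simp add: Un_commute)
  have new: "g w div 2 = m" "w \<notin> \<Union>P" if "w \<in> {a, b}" for w
    using that ab by (auto simp: g_def)
  have old: "g w div 2 < m" "g w = f w" "w \<notin> {a, b}" if "w \<in> \<Union>P" for w
  proof -
    have "g w < 2 * m" using bij_betwE[OF g_old] that by auto
    then show "g w div 2 < m" by (simp add: less_mult_imp_div_less mult.commute)
    show "g w = f w" "w \<notin> {a, b}" using that ab by (auto simp: g_def)
  qed
  show "\<forall>u\<in>\<Union>(insert {a, b} P). \<forall>v\<in>\<Union>(insert {a, b} P).
      (\<exists>e\<in>insert {a, b} P. u \<in> e \<and> v \<in> e) \<longleftrightarrow> g u div 2 = g v div 2"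
  proof (intro ballI)
    fix u v assume "u \<in> \<Union>(insert {a, b} P)" "v \<in> \<Union>(insert {a, b} P)"
    then consider "u \<in> {a, b}" "v \<in> {a, b}" | "u \<in> {a, b}" "v \<in> \<Union>P" | "u \<in> \<Union>P" "v \<in> {a, b}"
      | "u \<in> \<Union>P" "v \<in> \<Union>P"
      by blast
    then show "(\<exists>e\<in>insert {a, b} P. u \<in> e \<and> v \<in> e) \<longleftrightarrow> g u div 2 = g v div 2"
    proof cases
      case 1
      then show ?thesis using new by auto
    next
      case 2
      then show ?thesis using new(1,2)[of u] old(1,3)[of v] by force
    next
      case 3
      then show ?thesis using new(1,2)[of v] old(1,3)[of u] by force
    next
      case 4
      then have "(\<exists>e\<in>insert {a, b} P. u \<in> e \<and> v \<in> e) \<longleftrightarrow> (\<exists>e\<in>P. u \<in> e \<and> v \<in> e)"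
        using old(3) by blast
      also have "\<dots> \<longleftrightarrow> f u div 2 = f v div 2" using same 4 by blast
      finally show ?thesis using old(2) 4 by simp
    qed
  qed
qed

lemma disjoint_pairs_labelling:
  assumes "finite P" "pairwise disjnt P" "\<And>e. e \<in> P \<Longrightarrow> card e = 2"
  shows "\<exists>f. bij_betw f (\<Union>P) {0..<2 * card P} \<and>
    (\<forall>u\<in>\<Union>P. \<forall>v\<in>\<Union>P. (\<exists>e\<in>P. u \<in> e \<and> v \<in> e) \<longleftrightarrow> f u div 2 = f v div 2)"
  using assms
proof (induction P rule: finite_induct)
  case empty
  show ?case by (rule exI[of _ "\<lambda>_. 0"]) (auto simp: bij_betw_def)
next
  case (insert e P)
  have "pairwise disjnt P" using insert.prems(1) by (simp add: pairwise_insert)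
  then obtain f where f: "bij_betw f (\<Union>P) {0..<2 * card P}"
    and same: "\<forall>u\<in>\<Union>P. \<forall>v\<in>\<Union>P. (\<exists>e\<in>P. u \<in> e \<and> v \<in> e) \<longleftrightarrow> f u div 2 = f v div 2"
    using insert.IH insert.prems(2) by blast
  obtain a b where e: "e = {a, b}" "a \<noteq> b"
    using insert.prems(2)[of e] by (auto simp: card_2_iff)
  have "a \<notin> \<Union>P" "b \<notin> \<Union>P"
    using insert.prems(1) insert.hyps(2) e by (auto simp: pairwise_insert disjnt_def)
  note step = pairs_labelling_insert[OF f same e(2) this]
  have card_eq: "2 * card (insert {a, b} P) = 2 * card P + 2" using insert.hyps e by simp
  show ?case unfolding e(1) card_eq using step by blast
qed

lemma bij_betw_shift: "bij_betw (\<lambda>x::nat. x + d) {0..<b} {d..<b + d}"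
proof -
  have "(\<lambda>x. x + d) ` {0..<b} = {d..<b + d}" using image_add_atLeastLessThan'[of d 0 b] by simp
  then show ?thesis by (simp add: bij_betw_def inj_on_def)
qed

lemma bij_betw_point_two_blocks:
  fixes p s :: "'a \<Rightarrow> nat"
  assumes p: "bij_betw p C {0..<a}" and s: "bij_betw s R {0..<b}"
    and "c \<notin> C" "c \<notin> R" "C \<inter> R = {}"
  shows "bij_betw (\<lambda>u. if u = c then 0 else if u \<in> C then p u + 1 else s u + (a + 1))
    (insert c (C \<union> R)) {0..<a + b + 1}" (is "bij_betw ?f _ _")
proof -
  have "bij_betw ?f {c} {0}" by (simp add: bij_betw_def)
  moreover have "bij_betw ?f C {1..<a + 1}"
  proof -
    have "bij_betw ((\<lambda>x. x + 1) \<circ> p) C {1..<a + 1}"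
      using bij_betw_trans[OF p bij_betw_shift[of 1]] by simp
    then show ?thesis by (rule bij_betw_cong[THEN iffD1, rotated]) (use assms(3) in auto)
  qed
  moreover have "bij_betw ?f R {a + 1..<b + (a + 1)}"
  proof -
    have "bij_betw ((\<lambda>x. x + (a + 1)) \<circ> s) R {a + 1..<b + (a + 1)}"
      using bij_betw_trans[OF s bij_betw_shift[of "a + 1"]] by simp
    then show ?thesis by (rule bij_betw_cong[THEN iffD1, rotated]) (use assms(4,5) in auto)
  qed
  ultimately have "bij_betw ?f ({c} \<union> C \<union> R) ({0} \<union> {1..<a + 1} \<union> {a + 1..<b + (a + 1)})"
    by (intro bij_betw_combine) auto
  moreover have "{0} \<union> {1..<a + 1} \<union> {a + 1..<b + (a + 1)} = {0..<a + b + 1}" by auto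
  ultimately show ?thesis by simp
qed

lemma matching_of_pairing:
  assumes h: "bij_betw h D T" and disj: "D \<inter> T = {}" and adj: "\<And>x. x \<in> D \<Longrightarrow> E x (h x)"
  shows "is_matching E ((\<lambda>x. {x, h x}) ` D)" and "card ((\<lambda>x. {x, h x}) ` D) = card D"
proof -
  have h_out: "h x \<notin> D" if "x \<in> D" for x using bij_betwE[OF h] that disj by blast
  show "is_matching E ((\<lambda>x. {x, h x}) ` D)"
    unfolding is_matching_def
  proof (intro conjI ballI impI)
    show "(\<lambda>x. {x, h x}) ` D \<subseteq> edges E" using adj by (auto simp: edges_def)
  next
    fix e1 e2 assume "e1 \<in> (\<lambda>x. {x, h x}) ` D" "e2 \<in> (\<lambda>x. {x, h x}) ` D" "e1 \<noteq> e2"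
    then obtain x y where xy: "x \<in> D" "y \<in> D" "e1 = {x, h x}" "e2 = {y, h y}" "x \<noteq> y" by auto
    have "h x \<noteq> h y" using h xy by (meson bij_betw_def inj_onD)
    then show "e1 \<inter> e2 = {}" using xy h_out by auto
  qed
  have "inj_on (\<lambda>x. {x, h x}) D"
  proof (rule inj_onI)
    fix x y assume "x \<in> D" "y \<in> D" "{x, h x} = {y, h y}"
    then show "x = y" using h_out by (auto simp: doubleton_eq_iff)
  qed
  then show "card ((\<lambda>x. {x, h x}) ` D) = card D" by (simp add: card_image)
qed

lemma join_adj_partners:
  assumes "1 \<le> i" "i < n" "2 * k \<le> n"
  shows "{j \<in> {1..<n}. join_adj n k i j} = (if i \<le> 2 * k - 2 then {if odd i then i + 1 else i - 1} else {})"
  using assms unfolding join_adj_def by (auto; presburger)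

lemma join_adj_sym: "join_adj n k u v \<longleftrightarrow> join_adj n k v u"
  by (auto simp: join_adj_def)

section \<open>Dominating vertices and eccentricities\<close>

locale connected_simple_graph =
  fixes V :: "'a set" and E :: "'a \<Rightarrow> 'a \<Rightarrow> bool"
  assumes simple: "simple_graph V E" and connected: "connected_graph V E"
begin

lemma finite_V: "finite V"
  using simple by (simp add: simple_graph_def)

lemma adj_in_V: "E u v \<Longrightarrow> u \<in> V \<and> v \<in> V"
  using simple by (simp add: simple_graph_def)

lemma adj_irrefl: "E u v \<Longrightarrow> u \<noteq> v"
  using simple by (simp add: simple_graph_def)

lemma adj_sym: "E u v \<Longrightarrow> E v u"
  using simple by (simp add: simple_graph_def)

lemma V_nonempty: "V \<noteq> {}"
  using connected by (simp add: connected_graph_def)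

lemma walk_dist: "u \<in> V \<Longrightarrow> v \<in> V \<Longrightarrow> (E ^^ dist E u v) u v"
  unfolding dist_def using connected by (auto simp: connected_graph_def intro: LeastI_ex)

lemma dist_le_walk: "(E ^^ m) u v \<Longrightarrow> dist E u v \<le> m"
  unfolding dist_def by (rule Least_le)

lemma dist_eq_0_iff: "u \<in> V \<Longrightarrow> v \<in> V \<Longrightarrow> dist E u v = 0 \<longleftrightarrow> u = v"
  using walk_dist[of u v] dist_le_walk[of 0 u v] by auto

lemma dist_le_1_if_adj: "E u v \<Longrightarrow> dist E u v \<le> 1"
  using dist_le_walk[of 1 u v] by (simp add: relcompp_apply)

lemma dist_le_2_if_adj_adj: "E u x \<Longrightarrow> E x w \<Longrightarrow> dist E u w \<le> 2"
  using dist_le_walk[of 2 u w] by (auto simp: numeral_2_eq_2 relcompp_apply)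

lemma dist_ge_2_if_not_adj:
  assumes "u \<in> V" "v \<in> V" "u \<noteq> v" "\<not> E u v"
  shows "2 \<le> dist E u v"
proof -
  have "dist E u v \<noteq> 0" using assms dist_eq_0_iff by blast
  moreover have "dist E u v \<noteq> 1"
    using walk_dist[of u v] assms by (auto simp: relcompp_apply)
  ultimately show ?thesis by linarith
qed

lemma dist_le_ecc: "w \<in> V \<Longrightarrow> dist E u w \<le> ecc V E u"
  unfolding ecc_def using finite_V by (auto intro: Max_ge)

lemma ecc_le: "(\<And>w. w \<in> V \<Longrightarrow> dist E u w \<le> b) \<Longrightarrow> ecc V E u \<le> b"
  unfolding ecc_def using finite_V V_nonempty by auto

definition dominating :: "'a set" where
  "dominating = {u \<in> V. \<forall>w\<in>V. w \<noteq> u \<longrightarrow> E u w}"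

definition non_dominating :: "'a set" where
  "non_dominating = V - dominating"

definition nbrs :: "'a \<Rightarrow> 'a set" where
  "nbrs u = {v \<in> V. E u v}"

definition inner_degree_sum :: nat where
  "inner_degree_sum = (\<Sum>u\<in>non_dominating. card (nbrs u \<inter> non_dominating))"

lemma dominating_subset: "dominating \<subseteq> V"
  by (auto simp: dominating_def)

lemma finite_dominating: "finite dominating"
  using dominating_subset finite_V finite_subset by blast

lemma finite_non_dominating: "finite non_dominating"
  using finite_V by (simp add: non_dominating_def)

lemma card_V_split: "card V = card dominating + card non_dominating"
  using card_Diff_subset[OF finite_dominating dominating_subset]
    card_mono[OF finite_V dominating_subset]
  by (simp add: non_dominating_def)

lemma finite_nbrs: "finite (nbrs u)"
  using finite_V by (simp add: nbrs_def)

lemma ecc_dominating: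
  assumes "u \<in> dominating" "2 \<le> card V"
  shows "ecc V E u = 1"
proof (rule antisym)
  have uV: "u \<in> V" using assms(1) by (simp add: dominating_def)
  show "ecc V E u \<le> 1"
  proof (rule ecc_le)
    fix w assume "w \<in> V"
    then show "dist E u w \<le> 1"
      using assms(1) uV dist_le_1_if_adj[of u w] dist_eq_0_iff[of u w]
      by (cases "w = u") (auto simp: dominating_def)
  qed
  have "\<not> V \<subseteq> {u}" using assms(2) card_mono[of "{u}" V] by auto
  then obtain w where "w \<in> V" "w \<noteq> u" by blast
  then have "1 \<le> dist E u w" using dist_eq_0_iff[of u w] uV by simp
  then show "1 \<le> ecc V E u" using dist_le_ecc[OF \<open>w \<in> V\<close>, of u] by simp
qed

lemma ecc_non_dominating:
  assumes "u \<in> non_dominating"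
  shows "2 \<le> ecc V E u"
proof -
  obtain w where "w \<in> V" "w \<noteq> u" "\<not> E u w" and "u \<in> V"
    using assms by (auto simp: non_dominating_def dominating_def)
  then show ?thesis using dist_ge_2_if_not_adj[of u w] dist_le_ecc[of w u] by simp
qed

lemma ecc_le_2:
  assumes "dominating \<noteq> {}" "u \<in> V"
  shows "ecc V E u \<le> 2"
proof (rule ecc_le)
  fix w assume w: "w \<in> V"
  obtain x where x: "x \<in> dominating" using assms(1) by blast
  have adj_x: "E x y" if "y \<in> V" "y \<noteq> x" for y using x that by (simp add: dominating_def)
  consider "u = w" | "u = x" "u \<noteq> w" | "w = x" "u \<noteq> x" | "u \<noteq> x" "w \<noteq> x"
    by blast
  then show "dist E u w \<le> 2"
  proof cases
    case 1 then show ?thesis using dist_eq_0_iff[of u w] w by simp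
  next
    case 2 then show ?thesis using dist_le_1_if_adj adj_x[of w] w by force
  next
    case 3 then show ?thesis using dist_le_1_if_adj adj_sym adj_x[of u] assms(2) by force
  next
    case 4 then show ?thesis using dist_le_2_if_adj_adj adj_sym adj_x assms(2) w by blast
  qed
qed

lemma finite_edges: "finite (edges E)"
proof -
  have "edges E \<subseteq> Pow V" using adj_in_V by (auto simp: edges_def)
  then show ?thesis using finite_V by (meson finite_Pow_iff finite_subset)
qed

lemma twice_sigma2_eq_sum_nbrs:
  "2 * sigma2 V E = (\<Sum>u\<in>V. \<Sum>v\<in>nbrs u. ecc V E u * ecc V E v)"
proof -
  let ?S = "Sigma V nbrs" and ?g = "\<lambda>(u, v). ecc V E u * ecc V E v" and ?f = "\<lambda>(u, v). {u, v}"
  have fin: "finite ?S" using finite_V finite_nbrs by auto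
  have img: "?f ` ?S \<subseteq> edges E" by (force simp: nbrs_def edges_def)
  have "(\<Sum>u\<in>V. \<Sum>v\<in>nbrs u. ecc V E u * ecc V E v) = sum ?g ?S"
    using sum.Sigma[OF finite_V, of nbrs "\<lambda>u v. ecc V E u * ecc V E v"] finite_nbrs by simp
  also have "\<dots> = (\<Sum>e\<in>edges E. sum ?g {x. x \<in> ?S \<and> ?f x = e})"
    using sum.group[OF fin finite_edges img, of ?g] by simp
  also have "\<dots> = (\<Sum>e\<in>edges E. 2 * prod (ecc V E) e)"
  proof (rule sum.cong[OF refl])
    fix e assume "e \<in> edges E"
    then obtain a b where e: "e = {a, b}" "E a b" by (auto simp: edges_def)
    then have ab: "a \<noteq> b" by (simp add: adj_irrefl)
    have "{x. x \<in> ?S \<and> ?f x = e} = {(a, b), (b, a)}"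
      using e ab adj_sym[of a b] adj_in_V[of a b] by (auto simp: nbrs_def doubleton_eq_iff)
    then show "sum ?g {x. x \<in> ?S \<and> ?f x = e} = 2 * prod (ecc V E) e" using ab e by simp
  qed
  also have "\<dots> = 2 * sigma2 V E" by (simp add: sigma2_def sum_distrib_left)
  finally show ?thesis by simp
qed

lemma exists_closer_nbr:
  assumes "r \<in> V" "v \<in> V" "v \<noteq> r"
  obtains p where "E p v" "dist E r p < dist E r v"
proof -
  have "dist E r v \<noteq> 0" using dist_eq_0_iff assms by auto
  then obtain m where m: "dist E r v = Suc m" "(E ^^ Suc m) r v"
    using walk_dist[OF assms(1,2)] by (cases "dist E r v") auto
  then obtain p where "(E ^^ m) r p" "E p v" by (auto elim: relpowp_Suc_E)
  then show ?thesis using that dist_le_walk[of m r p] m by auto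
qed

text \<open>Every vertex other than a root r has a neighbour closer to r; the resulting
  arcs and their reversals are 2 (card V - 1) distinct adjacent ordered pairs.\<close>
lemma sum_card_nbrs_ge: "2 * (card V - 1) \<le> (\<Sum>u\<in>V. card (nbrs u))"
proof -
  obtain r where r: "r \<in> V" using V_nonempty by auto
  define p where "p v = (SOME p. E p v \<and> dist E r p < dist E r v)" for v
  have p: "E (p v) v \<and> dist E r (p v) < dist E r v" if "v \<in> V - {r}" for v
    unfolding p_def by (rule someI_ex) (use exists_closer_nbr[of r v] that r in auto)
  let ?A = "(\<lambda>v. (v, p v)) ` (V - {r})" and ?B = "(\<lambda>v. (p v, v)) ` (V - {r})"
  have card_A: "card ?A = card V - 1" and card_B: "card ?B = card V - 1"
    by (subst card_image; auto intro: inj_onI simp: finite_V r)+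
  have pV: "p v \<in> V" if "v \<in> V - {r}" for v
    using p[OF that] adj_in_V by blast
  have "?A \<inter> ?B = {}"
  proof (rule ccontr)
    assume "?A \<inter> ?B \<noteq> {}"
    then obtain v w where "v \<in> V - {r}" "w \<in> V - {r}" "v = p w" "p v = w" by auto
    then show False using p[of v] p[of w] by auto
  qed
  then have "2 * (card V - 1) = card (?A \<union> ?B)"
    using card_Un_disjoint[of ?A ?B] card_A card_B finite_V by simp
  also have "\<dots> \<le> card (Sigma V nbrs)"
  proof (rule card_mono)
    show "finite (Sigma V nbrs)" using finite_V finite_nbrs by auto
    show "?A \<union> ?B \<subseteq> Sigma V nbrs" using p pV adj_sym by (auto simp: nbrs_def)
  qed
  also have "\<dots> = (\<Sum>u\<in>V. card (nbrs u))" using card_SigmaI[OF finite_V, of nbrs] finite_nbrs by simp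
  finally show ?thesis .
qed

lemma twice_sigma2_ge_no_dominating:
  assumes "dominating = {}"
  shows "8 * (card V - 1) \<le> 2 * sigma2 V E"
proof -
  have ecc2: "2 \<le> ecc V E u" if "u \<in> V" for u
    using ecc_non_dominating that assms by (simp add: non_dominating_def)
  have "4 * (\<Sum>u\<in>V. card (nbrs u)) = (\<Sum>u\<in>V. \<Sum>v\<in>nbrs u. 2 * 2)"
    by (simp add: sum_distrib_left mult.commute)
  also have "\<dots> \<le> (\<Sum>u\<in>V. \<Sum>v\<in>nbrs u. ecc V E u * ecc V E v)"
    using ecc2 by (intro sum_mono mult_le_mono) (auto simp: nbrs_def)
  finally show ?thesis using sum_card_nbrs_ge twice_sigma2_eq_sum_nbrs by linarith
qed

lemma nbrs_dominating: "u \<in> dominating \<Longrightarrow> nbrs u = V - {u}"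
  using adj_irrefl by (auto simp: nbrs_def dominating_def)

lemma nbrs_non_dominating:
  assumes "u \<in> non_dominating"
  shows "nbrs u = dominating \<union> (nbrs u \<inter> non_dominating)"
proof -
  have "E u v" if "v \<in> dominating" for v
  proof -
    have "u \<in> V" "u \<noteq> v" using that assms by (auto simp: non_dominating_def)
    then show ?thesis using that adj_sym by (auto simp: dominating_def)
  qed
  then show ?thesis using dominating_subset by (auto simp: nbrs_def non_dominating_def)
qed

lemma ecc_eq_2:
  assumes "dominating \<noteq> {}" "u \<in> non_dominating"
  shows "ecc V E u = 2"
proof -
  have "u \<in> V" using assms(2) by (simp add: non_dominating_def)
  with ecc_le_2[OF assms(1)] ecc_non_dominating[OF assms(2)] show ?thesis by (simp add: le_antisym)
qed

lemma sum_split_dominating: "sum g V = sum g dominating + sum g non_dominating"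
  using sum.subset_diff[OF dominating_subset finite_V, of g] by (simp add: non_dominating_def add.commute)

context
  assumes dominating_ne: "dominating \<noteq> {}" and two_le_card: "2 \<le> card V"
begin

lemma sum_nbrs_ecc_dominating:
  assumes u: "u \<in> dominating"
  shows "(\<Sum>v\<in>nbrs u. ecc V E u * ecc V E v) = card dominating + 2 * card non_dominating - 1"
proof -
  have "(\<Sum>v\<in>V. ecc V E v) = card dominating + 2 * card non_dominating"
    using ecc_dominating[OF _ two_le_card] ecc_eq_2[OF dominating_ne] by (simp add: sum_split_dominating)
  moreover have "u \<in> V" using u dominating_subset by blast
  then have "(\<Sum>v\<in>nbrs u. ecc V E v) = (\<Sum>v\<in>V. ecc V E v) - ecc V E u"
    using finite_V by (simp add: nbrs_dominating[OF u] sum_diff1_nat)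
  ultimately show ?thesis using ecc_dominating[OF u two_le_card] by simp
qed

lemma sum_nbrs_ecc_non_dominating:
  assumes u: "u \<in> non_dominating"
  shows "(\<Sum>v\<in>nbrs u. ecc V E u * ecc V E v) = 2 * card dominating + 4 * card (nbrs u \<inter> non_dominating)"
proof -
  have "(\<Sum>v\<in>nbrs u. ecc V E v) = (\<Sum>v\<in>dominating \<union> (nbrs u \<inter> non_dominating). ecc V E v)"
    using nbrs_non_dominating[OF u] by (rule arg_cong)
  also have "\<dots> = (\<Sum>v\<in>dominating. ecc V E v) + (\<Sum>v\<in>nbrs u \<inter> non_dominating. ecc V E v)"
    using finite_dominating finite_non_dominating
    by (intro sum.union_disjoint) (auto simp: non_dominating_def)
  also have "\<dots> = card dominating + 2 * card (nbrs u \<inter> non_dominating)"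
    using ecc_dominating[OF _ two_le_card] ecc_eq_2[OF dominating_ne] by simp
  finally show ?thesis using ecc_eq_2[OF dominating_ne u] by (simp add: sum_distrib_left[symmetric])
qed

lemma twice_sigma2_eq:
  "2 * sigma2 V E = card dominating * (card dominating - 1)
    + 4 * card dominating * card non_dominating + 4 * inner_degree_sum"
proof -
  let ?d = "card dominating" and ?r = "card non_dominating"
  have "2 * sigma2 V E = (\<Sum>u\<in>dominating. \<Sum>v\<in>nbrs u. ecc V E u * ecc V E v)
      + (\<Sum>u\<in>non_dominating. \<Sum>v\<in>nbrs u. ecc V E u * ecc V E v)"
    using twice_sigma2_eq_sum_nbrs sum_split_dominating by simp
  also have "\<dots> = ?d * (?d + 2 * ?r - 1) + 2 * ?d * ?r + 4 * inner_degree_sum"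
    using sum_nbrs_ecc_dominating sum_nbrs_ecc_non_dominating
    by (simp add: sum.distrib sum_distrib_left inner_degree_sum_def)
  also have "\<dots> = ?d * (?d - 1) + 4 * ?d * ?r + 4 * inner_degree_sum"
  proof -
    have "?d \<ge> 1" using dominating_ne finite_dominating by (simp add: Suc_leI card_gt_0_iff)
    then show ?thesis by (cases ?d) (auto simp: algebra_simps)
  qed
  finally show ?thesis .
qed

end

subsection \<open>Matchings\<close>

lemma matching_finite: "is_matching E M \<Longrightarrow> finite M"
  using finite_edges by (auto simp: is_matching_def intro: finite_subset)

lemma matching_edge:
  assumes "is_matching E M" "e \<in> M"
  obtains a b where "e = {a, b}" "E a b"
  using assms by (auto simp: is_matching_def edges_def)

lemma
  shows exists_maximum_matching: "\<exists>M. is_matching E M \<and> card M = matching_number E"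
    and card_le_matching_number: "is_matching E M \<Longrightarrow> card M \<le> matching_number E"
proof -
  let ?K = "{card M | M. is_matching E M}"
  have "?K \<subseteq> card ` Pow (edges E)" by (auto simp: is_matching_def)
  then have fin: "finite ?K" using finite_edges by (meson finite_Pow_iff finite_imageI finite_subset)
  have "is_matching E {}" by (simp add: is_matching_def)
  then have "?K \<noteq> {}" by blast
  then show "\<exists>M. is_matching E M \<and> card M = matching_number E"
    using Max_in[OF fin] unfolding matching_number_def by auto
  show "is_matching E M \<Longrightarrow> card M \<le> matching_number E"
    using Max_ge[OF fin] unfolding matching_number_def by auto
qed

lemma matching_number_ge_dominating:
  assumes "j \<le> card dominating" "2 * j \<le> card V"
  shows "j \<le> matching_number E"
proof -
  obtain D where D: "D \<subseteq> dominating" "card D = j" "finite D"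
    using obtain_subset_with_card_n[OF assms(1)] by metis
  have "card (V - D) = card V - j"
    using card_Diff_subset[OF D(3)] D(1,2) dominating_subset by auto
  then have "j \<le> card (V - D)" using assms(2) by simp
  then obtain T where T: "T \<subseteq> V - D" "card T = j" "finite T"
    using obtain_subset_with_card_n by metis
  obtain h where h: "bij_betw h D T" using finite_same_card_bij[OF D(3) T(3)] D(2) T(2) by auto
  have "E x (h x)" if "x \<in> D" for x
  proof -
    have "h x \<in> V" "h x \<noteq> x" using bij_betwE[OF h] T that by auto
    then show ?thesis using that D(1) by (auto simp: dominating_def)
  qed
  then have "is_matching E ((\<lambda>x. {x, h x}) ` D)" "card ((\<lambda>x. {x, h x}) ` D) = j"
    using matching_of_pairing[OF h] T(1) D(2) by auto
  then show ?thesis using card_le_matching_number by metis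
qed

definition dominating_free :: "'a set set \<Rightarrow> 'a set set" where
  "dominating_free M = {e \<in> M. e \<inter> dominating = {}}"

lemma card_le_card_dominating_free:
  assumes "is_matching E M"
  shows "card M \<le> card (dominating_free M) + card dominating"
proof -
  have fin: "finite M" using matching_finite[OF assms] .
  have sub: "dominating_free M \<subseteq> M" by (auto simp: dominating_free_def)
  define pick where "pick e = (SOME x. x \<in> e \<inter> dominating)" for e :: "'a set"
  have pick: "pick e \<in> e \<inter> dominating" if "e \<in> M - dominating_free M" for e
    unfolding pick_def by (rule someI_ex) (use that in \<open>auto simp: dominating_free_def\<close>)
  have "inj_on pick (M - dominating_free M)"
  proof (rule inj_onI)
    fix e1 e2 assume "e1 \<in> M - dominating_free M" "e2 \<in> M - dominating_free M" "pick e1 = pick e2"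
    then show "e1 = e2" using pick[of e1] pick[of e2] assms by (auto simp: is_matching_def)
  qed
  moreover have "pick ` (M - dominating_free M) \<subseteq> dominating" using pick by auto
  ultimately have "card (M - dominating_free M) \<le> card dominating"
    using card_inj_on_le finite_dominating by blast
  moreover have "card M = card (dominating_free M) + card (M - dominating_free M)"
    using card_Diff_subset[OF finite_subset[OF sub fin] sub] card_mono[OF fin sub] by simp
  ultimately show ?thesis by simp
qed

lemma dominating_free_edge:
  assumes "is_matching E M" "e \<in> dominating_free M" "u \<in> e"
  obtains w where "e = {u, w}" "E u w" "u \<noteq> w" "u \<in> non_dominating" "w \<in> non_dominating"
proof -
  have "e \<in> M" using assms(2) by (simp add: dominating_free_def)
  then obtain a b where ab: "e = {a, b}" "E a b" using matching_edge[OF assms(1)] by blast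
  then have ab_nd: "a \<in> non_dominating" "b \<in> non_dominating"
    using assms(2) adj_in_V by (auto simp: dominating_free_def non_dominating_def)
  have "u = a \<or> u = b" using assms(3) ab(1) by blast
  then show ?thesis
  proof
    assume "u = a"
    then show ?thesis using ab ab_nd adj_irrefl by (intro that[of b]) auto
  next
    assume "u = b"
    then show ?thesis using ab ab_nd adj_irrefl adj_sym by (intro that[of a]) (auto simp: insert_commute)
  qed
qed

lemma dominating_free_pairs:
  assumes "is_matching E M"
  shows "pairwise disjnt (dominating_free M)" and "e \<in> dominating_free M \<Longrightarrow> card e = 2"
proof -
  show "pairwise disjnt (dominating_free M)" using assms
    by (auto simp: pairwise_def disjnt_def dominating_free_def is_matching_def)
  assume "e \<in> dominating_free M"
  then have "e \<in> M" by (simp add: dominating_free_def)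
  then obtain a b where "e = {a, b}" "E a b" using matching_edge[OF assms] by blast
  then show "card e = 2" using adj_irrefl by auto
qed

lemma card_Union_dominating_free:
  assumes "is_matching E M"
  shows "card (\<Union>(dominating_free M)) = 2 * card (dominating_free M)"
proof -
  have "finite e" if "e \<in> dominating_free M" for e
    using dominating_free_pairs(2)[OF assms that] card.infinite by fastforce
  then show ?thesis using dominating_free_pairs[OF assms] by (simp add: card_Union_disjoint)
qed

lemma inner_degree_pos:
  assumes "is_matching E M" "u \<in> \<Union>(dominating_free M)"
  shows "1 \<le> card (nbrs u \<inter> non_dominating)"
proof -
  obtain e where "e \<in> dominating_free M" "u \<in> e" using assms(2) by blast
  then obtain w where "E u w" "w \<in> non_dominating" by (rule dominating_free_edge[OF assms(1)])
  then have "w \<in> nbrs u \<inter> non_dominating" using adj_in_V by (auto simp: nbrs_def)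
  then have "nbrs u \<inter> non_dominating \<noteq> {}" by blast
  then show ?thesis using finite_nbrs[of u] by (simp add: Suc_le_eq card_gt_0_iff)
qed

lemma twice_card_dominating_free_le:
  assumes "is_matching E M"
  shows "2 * card (dominating_free M) \<le> inner_degree_sum"
proof -
  let ?C = "\<Union>(dominating_free M)"
  have "?C \<subseteq> non_dominating" using dominating_free_edge[OF assms] by blast
  have "2 * card (dominating_free M) = (\<Sum>u\<in>?C. 1)" using card_Union_dominating_free[OF assms] by simp
  also have "\<dots> \<le> (\<Sum>u\<in>?C. card (nbrs u \<inter> non_dominating))"
    using inner_degree_pos[OF assms] by (rule sum_mono)
  also have "\<dots> \<le> inner_degree_sum"
    unfolding inner_degree_sum_def
    using \<open>?C \<subseteq> non_dominating\<close> finite_non_dominating by (intro sum_mono2) auto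
  finally show ?thesis .
qed

lemma inner_degree_if_tight:
  assumes M: "is_matching E M" and tight: "inner_degree_sum = 2 * card (dominating_free M)"
    and u: "u \<in> non_dominating"
  shows "card (nbrs u \<inter> non_dominating) = (if u \<in> \<Union>(dominating_free M) then 1 else 0)"
proof -
  let ?C = "\<Union>(dominating_free M)" and ?deg = "\<lambda>u. card (nbrs u \<inter> non_dominating)"
  have C_sub: "?C \<subseteq> non_dominating" using dominating_free_edge[OF M] by blast
  have fin_C: "finite ?C" using finite_subset[OF C_sub finite_non_dominating] .
  have split: "inner_degree_sum = (\<Sum>u\<in>?C. ?deg u) + (\<Sum>u\<in>non_dominating - ?C. ?deg u)"
    unfolding inner_degree_sum_def using sum.subset_diff[OF C_sub finite_non_dominating, of ?deg] by simp
  have ge: "card ?C \<le> (\<Sum>u\<in>?C. ?deg u)"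
    using sum_mono[of ?C "\<lambda>_. 1" ?deg] inner_degree_pos[OF M] by simp
  have off_C: "(\<Sum>u\<in>non_dominating - ?C. ?deg u) = 0" and on_C: "(\<Sum>u\<in>?C. ?deg u) = card ?C"
    using split ge tight card_Union_dominating_free[OF M] by linarith+
  show ?thesis
  proof (cases "u \<in> ?C")
    case True
    have "(\<Sum>u\<in>?C. ?deg u - 1) = (\<Sum>u\<in>?C. ?deg u) - (\<Sum>u\<in>?C. 1)"
      using inner_degree_pos[OF M] by (intro sum_subtractf_nat) auto
    then have "(\<Sum>u\<in>?C. ?deg u - 1) = 0" using on_C by simp
    then have "\<forall>x\<in>?C. ?deg x - 1 = 0" by (simp only: sum_eq_0_iff[OF fin_C])
    then have "?deg u - 1 = 0" using True by blast
    then show ?thesis using True inner_degree_pos[OF M True] by simp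
  next
    case False
    then have "?deg u = 0" using off_C u finite_non_dominating by (simp add: sum_eq_0_iff)
    then show ?thesis using False by simp
  qed
qed

lemma adj_non_dominating_iff_if_tight:
  assumes M: "is_matching E M" and tight: "inner_degree_sum = 2 * card (dominating_free M)"
    and u: "u \<in> non_dominating" and v: "v \<in> non_dominating"
  shows "E u v \<longleftrightarrow> (\<exists>e\<in>dominating_free M. u \<in> e \<and> v \<in> e \<and> u \<noteq> v)"
proof
  assume uv: "E u v"
  then have v_nbr: "v \<in> nbrs u \<inter> non_dominating" using v adj_in_V by (auto simp: nbrs_def)
  have "u \<in> \<Union>(dominating_free M)"
  proof (rule ccontr)
    assume "u \<notin> \<Union>(dominating_free M)"
    then have "card (nbrs u \<inter> non_dominating) = 0" using inner_degree_if_tight[OF M tight u] by simp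
    then show False using v_nbr finite_nbrs[of u] by auto
  qed
  then obtain e where e: "e \<in> dominating_free M" "u \<in> e" by blast
  then obtain w where w: "e = {u, w}" "E u w" "u \<noteq> w" "w \<in> non_dominating"
    by (rule dominating_free_edge[OF M])
  then have w_nbr: "w \<in> nbrs u \<inter> non_dominating" using adj_in_V by (auto simp: nbrs_def)
  have "card (nbrs u \<inter> non_dominating) = 1"
    using inner_degree_if_tight[OF M tight u] e by auto
  then obtain z where "nbrs u \<inter> non_dominating = {z}" by (rule card_1_singletonE)
  then have "v = w" using v_nbr w_nbr by auto
  then show "\<exists>e\<in>dominating_free M. u \<in> e \<and> v \<in> e \<and> u \<noteq> v" using e w by auto
next
  assume "\<exists>e\<in>dominating_free M. u \<in> e \<and> v \<in> e \<and> u \<noteq> v"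
  then obtain e where e: "e \<in> dominating_free M" "u \<in> e" "v \<in> e" "u \<noteq> v" by blast
  then obtain w where "e = {u, w}" "E u w" using dominating_free_edge[OF M] by metis
  then show "E u v" using e by auto
qed

subsection \<open>Lower bounds\<close>

lemma twice_sigma2_constraints:
  assumes "2 \<le> card V"
  defines "d \<equiv> int (card dominating)" and "r \<equiv> int (card non_dominating)"
    and "s \<equiv> int inner_degree_sum" and "k \<equiv> int (matching_number E)"
    and "x \<equiv> int (2 * sigma2 V E)"
  shows "d = 0 \<Longrightarrow> 8 * (d + r - 1) \<le> x"
    and "1 \<le> d \<Longrightarrow> x = d * (d - 1) + 4 * d * r + 4 * s"
    and "2 * (k - d) \<le> s"
    and "k + 1 \<le> d \<Longrightarrow> d + r \<le> 2 * k + 1"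
proof -
  have n: "d + r = int (card V)" using card_V_split by (simp add: d_def r_def)
  show "8 * (d + r - 1) \<le> x" if "d = 0"
  proof -
    have "dominating = {}" using that finite_dominating by (simp add: d_def)
    then have "8 * (card V - 1) \<le> 2 * sigma2 V E" by (rule twice_sigma2_ge_no_dominating)
    then show ?thesis using assms(1) by (simp add: n x_def of_nat_diff)
  qed
  show "x = d * (d - 1) + 4 * d * r + 4 * s" if "1 \<le> d"
  proof -
    have "dominating \<noteq> {}" using that by (auto simp: d_def)
    then show ?thesis using twice_sigma2_eq[OF _ assms(1)] that
      by (simp add: d_def r_def s_def x_def of_nat_diff)
  qed
  obtain M where M: "is_matching E M" "card M = matching_number E"
    using exists_maximum_matching by blast
  show "2 * (k - d) \<le> s"
    using card_le_card_dominating_free[OF M(1)] twice_card_dominating_free_le[OF M(1)] M(2)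
    by (simp add: d_def s_def k_def)
  show "d + r \<le> 2 * k + 1" if "k + 1 \<le> d"
  proof (rule ccontr)
    assume "\<not> d + r \<le> 2 * k + 1"
    then have "matching_number E + 1 \<le> matching_number E"
      using that n by (intro matching_number_ge_dominating) (simp_all add: d_def k_def)
    then show False by simp
  qed
qed

lemma sigma2_ge_choose_two:
  assumes "card V = n" "matching_number E = k" "4 \<le> n" "n \<le> 6" "k = n div 2"
  shows "n choose 2 \<le> sigma2 V E" and "sigma2 V E = n choose 2 \<longleftrightarrow> dominating = V"
proof -
  note facts = twice_sigma2_constraints[unfolded assms(1,2)]
  have n: "int n = int (card dominating) + int (card non_dominating)"
    using card_V_split assms(1) by simp
  have "int k = (int (card dominating) + int (card non_dominating)) div 2"
    using assms(5) by (simp flip: n zdiv_int)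
  note bound = sigma2_arith_small[OF _ _ _ _ _ this facts(3,1,2)]
  have "int (n * (n - 1)) \<le> int (2 * sigma2 V E)"
    and eq: "int (2 * sigma2 V E) = int (n * (n - 1)) \<Longrightarrow> card non_dominating = 0"
    using bound assms(3,4) by (simp_all add: n[symmetric] of_nat_diff)
  then show "n choose 2 \<le> sigma2 V E"
    using two_mul_choose_two[of n] by linarith
  show "sigma2 V E = n choose 2 \<longleftrightarrow> dominating = V"
  proof
    assume "sigma2 V E = n choose 2"
    then have "card non_dominating = 0" using eq two_mul_choose_two[of n] by simp
    then show "dominating = V"
      using finite_non_dominating dominating_subset by (auto simp: non_dominating_def)
  next
    assume all: "dominating = V"
    then have "non_dominating = {}" by (simp add: non_dominating_def)
    then have "2 * sigma2 V E = n * (n - 1)"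
      using twice_sigma2_eq all assms(1,3) V_nonempty by (simp add: inner_degree_sum_def)
    then show "sigma2 V E = n choose 2" using two_mul_choose_two[of n] by simp
  qed
qed

lemma sigma2_ge_linear:
  assumes "card V = n" "matching_number E = k" "2 \<le> k" "2 * k \<le> n" "\<not> (n \<le> 6 \<and> k = n div 2)"
  shows "2 * n + 4 * k - 6 \<le> sigma2 V E"
    and "sigma2 V E = 2 * n + 4 * k - 6 \<longleftrightarrow> card dominating = 1 \<and> inner_degree_sum = 2 * (k - 1)"
proof -
  note facts = twice_sigma2_constraints[unfolded assms(1,2)]
  have n: "int n = int (card dominating) + int (card non_dominating)"
    using card_V_split assms(1) by simp
  have "\<not> (int (card dominating) + int (card non_dominating) \<le> 6
      \<and> int k = (int (card dominating) + int (card non_dominating)) div 2)"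
  proof -
    have "int k = int n div 2 \<longleftrightarrow> k = n div 2" by presburger
    then show ?thesis using assms(5) by (simp flip: n)
  qed
  note bound = sigma2_arith_large[OF _ _ _ _ _ this facts(3,4,1,2)]
  have "2 * (2 * int n + 4 * int k - 6) \<le> int (2 * sigma2 V E)"
    and eq: "int (2 * sigma2 V E) = 2 * (2 * int n + 4 * int k - 6) \<Longrightarrow>
      card dominating = 1 \<and> int inner_degree_sum = 2 * (int k - 1)"
    using bound assms(1,3,4) n by simp_all
  moreover have target: "int (2 * n + 4 * k - 6) = 2 * int n + 4 * int k - 6"
    using assms(3) by (simp add: of_nat_diff)
  ultimately have "int (2 * n + 4 * k - 6) \<le> int (sigma2 V E)" by simp
  then show "2 * n + 4 * k - 6 \<le> sigma2 V E" by (simp only: of_nat_le_iff)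
  show "sigma2 V E = 2 * n + 4 * k - 6 \<longleftrightarrow> card dominating = 1 \<and> inner_degree_sum = 2 * (k - 1)"
  proof
    assume "sigma2 V E = 2 * n + 4 * k - 6"
    then have "card dominating = 1" and "int inner_degree_sum = 2 * (int k - 1)"
      using eq target by simp_all
    moreover have "2 * (int k - 1) = int (2 * (k - 1))" using assms(3) by (simp add: of_nat_diff)
    ultimately show "card dominating = 1 \<and> inner_degree_sum = 2 * (k - 1)" by simp
  next
    assume params: "card dominating = 1 \<and> inner_degree_sum = 2 * (k - 1)"
    then have "dominating \<noteq> {}" by auto
    moreover have "card non_dominating = n - 1" using params card_V_split assms(1) by simp
    ultimately have "2 * sigma2 V E = 4 * (n - 1) + 8 * (k - 1)"
      using twice_sigma2_eq params assms(1,3,4) by simp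
    then show "sigma2 V E = 2 * n + 4 * k - 6" using assms(3,4) by simp
  qed
qed

subsection \<open>The extremal graphs\<close>

lemma graph_iso_complete_iff:
  assumes "card V = n"
  shows "graph_iso V E {0..<n} (complete_adj n) \<longleftrightarrow> dominating = V"
proof
  assume "graph_iso V E {0..<n} (complete_adj n)"
  then obtain f where f: "bij_betw f V {0..<n}"
    and adj: "\<And>u v. u \<in> V \<Longrightarrow> v \<in> V \<Longrightarrow> E u v \<longleftrightarrow> complete_adj n (f u) (f v)"
    unfolding graph_iso_def by blast
  have "E u w" if "u \<in> V" "w \<in> V" "w \<noteq> u" for u w
    using that adj[of u w] bij_betw_apply[OF f] bij_betw_imp_inj_on[OF f]
    by (auto simp: complete_adj_def inj_on_def)
  then show "dominating = V" by (auto simp: dominating_def)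
next
  assume all: "dominating = V"
  obtain f where f: "bij_betw f V {0..<n}"
    using ex_bij_betw_finite_nat[OF finite_V] assms by auto
  have "E u v \<longleftrightarrow> complete_adj n (f u) (f v)" if "u \<in> V" "v \<in> V" for u v
  proof -
    have "u \<in> dominating" using that all by simp
    then have "E u v \<longleftrightarrow> u \<noteq> v" using that adj_irrefl by (auto simp: dominating_def)
    also have "\<dots> \<longleftrightarrow> complete_adj n (f u) (f v)"
      using that bij_betw_apply[OF f] bij_betw_imp_inj_on[OF f]
      by (auto simp: complete_adj_def inj_on_def)
    finally show ?thesis .
  qed
  then show "graph_iso V E {0..<n} (complete_adj n)" using f by (auto simp: graph_iso_def)
qed

context
  fixes f :: "'a \<Rightarrow> nat" and n k :: nat
  assumes f: "bij_betw f V {0..<n}"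
    and f_adj: "\<And>u v. u \<in> V \<Longrightarrow> v \<in> V \<Longrightarrow> E u v \<longleftrightarrow> join_adj n k (f u) (f v)"
    and k: "2 \<le> k" "2 * k \<le> n"
begin

lemma join_label_onto:
  assumes "j < n"
  shows "\<exists>u\<in>V. f u = j"
proof -
  have "j \<in> f ` V" using f assms by (simp add: bij_betw_def)
  then show ?thesis by auto
qed

lemma dominating_iff_join_label_0:
  assumes u: "u \<in> V"
  shows "u \<in> dominating \<longleftrightarrow> f u = 0"
proof
  assume "f u = 0"
  have "E u w" if "w \<in> V" "w \<noteq> u" for w
  proof -
    have "f w \<noteq> 0" "f w < n"
      using \<open>f u = 0\<close> inj_on_eq_iff[OF bij_betw_imp_inj_on[OF f] u that(1)]
        bij_betw_apply[OF f that(1)] that(2) by auto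
    then show ?thesis using f_adj[OF u that(1)] \<open>f u = 0\<close> by (simp add: join_adj_def)
  qed
  then show "u \<in> dominating" using u by (simp add: dominating_def)
next
  assume dom: "u \<in> dominating"
  show "f u = 0"
  proof (rule ccontr)
    assume "f u \<noteq> 0"
    text \<open>A label that is not joined to f u: the last one, or 1 if f u is unmatched.\<close>
    define j where "j = (if f u \<le> 2 * k - 2 then n - 1 else 1)"
    have "2 * k - 2 < n - 1" using k by simp
    then have j: "j < n" "j \<noteq> f u" "\<not> join_adj n k (f u) j"
      using k(1) \<open>f u \<noteq> 0\<close> by (auto simp: j_def join_adj_def)
    then obtain w where w: "w \<in> V" "f w = j" using join_label_onto by blast
    then have "w \<noteq> u" "\<not> E u w" using j f_adj[OF u w(1)] by auto
    then show False using dom w(1) by (auto simp: dominating_def)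
  qed
qed

lemma card_dominating_join: "card dominating = 1"
proof -
  obtain c where c: "c \<in> V" "f c = 0" using join_label_onto k by fastforce
  have "dominating = {c}"
  proof (intro equalityI subsetI)
    fix u assume "u \<in> dominating"
    then have "u \<in> V" "f u = 0" using dominating_iff_join_label_0 dominating_subset by auto
    then show "u \<in> {c}" using inj_on_eq_iff[OF bij_betw_imp_inj_on[OF f], of u c] c by simp
  qed (use c dominating_iff_join_label_0 in auto)
  then show ?thesis by simp
qed

lemma non_dominating_iff_join_label: "u \<in> non_dominating \<longleftrightarrow> u \<in> V \<and> f u \<noteq> 0"
  using dominating_iff_join_label_0 by (auto simp: non_dominating_def)

lemma join_label_non_dominating: "f ` non_dominating = {1..<n}"
proof (intro equalityI subsetI)
  fix j assume "j \<in> f ` non_dominating"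
  then show "j \<in> {1..<n}" using non_dominating_iff_join_label bij_betw_apply[OF f] by auto
next
  fix j assume "j \<in> {1..<n}"
  then obtain u where "u \<in> V" "f u = j" using join_label_onto by auto
  then show "j \<in> f ` non_dominating" using \<open>j \<in> {1..<n}\<close> non_dominating_iff_join_label by auto
qed

lemma bij_betw_join_label_non_dominating: "bij_betw f non_dominating {1..<n}"
  using bij_betw_subset[OF f] join_label_non_dominating by (auto simp: non_dominating_def)

lemma inner_degree_join:
  assumes u: "u \<in> non_dominating"
  shows "card (nbrs u \<inter> non_dominating) = (if f u \<le> 2 * k - 2 then 1 else 0)"
proof -
  have uV: "u \<in> V" using u non_dominating_iff_join_label by blast
  have "f ` (nbrs u \<inter> non_dominating) = {j \<in> {1..<n}. join_adj n k (f u) j}"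
  proof (intro equalityI subsetI)
    fix j assume "j \<in> f ` (nbrs u \<inter> non_dominating)"
    then obtain w where "w \<in> nbrs u" "w \<in> non_dominating" "j = f w" by blast
    then show "j \<in> {j \<in> {1..<n}. join_adj n k (f u) j}"
      using f_adj[OF uV] bij_betw_apply[OF bij_betw_join_label_non_dominating] by (auto simp: nbrs_def)
  next
    fix j assume j: "j \<in> {j \<in> {1..<n}. join_adj n k (f u) j}"
    then have "j \<in> f ` non_dominating" using join_label_non_dominating by simp
    then obtain w where "w \<in> non_dominating" "f w = j" by blast
    then show "j \<in> f ` (nbrs u \<inter> non_dominating)"
      using j f_adj[OF uV] non_dominating_iff_join_label by (auto simp: nbrs_def)
  qed
  moreover have "inj_on f (nbrs u \<inter> non_dominating)"
    using bij_betw_imp_inj_on[OF bij_betw_join_label_non_dominating] by (rule inj_on_subset) blast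
  ultimately have "card (nbrs u \<inter> non_dominating) = card {j \<in> {1..<n}. join_adj n k (f u) j}"
    using card_image by fastforce
  then show ?thesis
    using join_adj_partners[of "f u" n k] bij_betw_apply[OF bij_betw_join_label_non_dominating u] k(2)
    by auto
qed

lemma inner_degree_sum_join: "inner_degree_sum = 2 * (k - 1)"
proof -
  have "inner_degree_sum = (\<Sum>i\<in>{1..<n}. if i \<le> 2 * k - 2 then 1 else 0)"
    unfolding inner_degree_sum_def
    using inner_degree_join sum.reindex_bij_betw[OF bij_betw_join_label_non_dominating] by simp
  also have "\<dots> = card {i \<in> {1..<n}. i \<le> 2 * k - 2}"
    using sum.inter_filter[of "{1..<n}" "\<lambda>_. 1::nat" "\<lambda>i. i \<le> 2 * k - 2"] by simp
  also have "{i \<in> {1..<n}. i \<le> 2 * k - 2} = {1..2 * k - 2}" using k by auto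
  finally show ?thesis using k by simp
qed

end

lemma join_iso_imp_parameters:
  assumes "graph_iso V E {0..<n} (join_adj n k)" "2 \<le> k" "2 * k \<le> n"
  shows "card dominating = 1 \<and> inner_degree_sum = 2 * (k - 1)"
  using assms card_dominating_join inner_degree_sum_join unfolding graph_iso_def by blast

lemma exists_join_labelling:
  assumes c: "dominating = {c}" and M: "is_matching E M"
    and card_P: "card (dominating_free M) = k - 1" and n: "card V = n"
  obtains f where "bij_betw f V {0..<n}" and "f c = 0"
    and "\<And>u. u \<in> \<Union>(dominating_free M) \<Longrightarrow> 1 \<le> f u \<and> f u \<le> 2 * k - 2"
    and "\<And>u. u \<in> non_dominating - \<Union>(dominating_free M) \<Longrightarrow> 2 * k - 2 < f u"
    and "\<And>u v. u \<in> \<Union>(dominating_free M) \<Longrightarrow> v \<in> \<Union>(dominating_free M) \<Longrightarrow>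
      (\<exists>e\<in>dominating_free M. u \<in> e \<and> v \<in> e) \<longleftrightarrow> (f u + 1) div 2 = (f v + 1) div 2"
proof -
  let ?P = "dominating_free M"
  let ?C = "\<Union>?P" and ?R = "non_dominating - \<Union>?P"
  have C_sub: "?C \<subseteq> non_dominating" using dominating_free_edge[OF M] by blast
  have fin_P: "finite ?P"
    using matching_finite[OF M] by (rule finite_subset[rotated]) (auto simp: dominating_free_def)
  obtain p where p: "bij_betw p ?C {0..<2 * card ?P}"
    and same_pair: "\<forall>u\<in>?C. \<forall>v\<in>?C. (\<exists>e\<in>?P. u \<in> e \<and> v \<in> e) \<longleftrightarrow> p u div 2 = p v div 2"
    using disjoint_pairs_labelling[OF fin_P dominating_free_pairs[OF M]] by blast
  obtain s where s: "bij_betw s ?R {0..<card ?R}"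
    using ex_bij_betw_finite_nat finite_non_dominating by blast
  have c_nd: "c \<notin> non_dominating" using c by (simp add: non_dominating_def)
  have V_eq: "V = insert c (?C \<union> ?R)"
    using C_sub c dominating_subset by (auto simp: non_dominating_def)
  have n_eq: "n = 2 * card ?P + card ?R + 1"
    using n card_V_split c card_Diff_subset[OF finite_subset[OF C_sub finite_non_dominating] C_sub]
      card_mono[OF finite_non_dominating C_sub] card_Union_dominating_free[OF M] by simp
  define f where "f u = (if u = c then 0 else if u \<in> ?C then p u + 1 else s u + (2 * card ?P + 1))" for u
  have "bij_betw f (insert c (?C \<union> ?R)) {0..<2 * card ?P + card ?R + 1}"
    unfolding f_def using bij_betw_point_two_blocks[OF p s] C_sub c_nd by blast
  then have bij: "bij_betw f V {0..<n}" by (simp only: V_eq[symmetric] n_eq[symmetric])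
  have f_C: "f u = p u + 1" "p u < 2 * (k - 1)" if "u \<in> ?C" for u
    using that c_nd C_sub bij_betw_apply[OF p that] card_P by (auto simp: f_def)
  have f_R: "f u = s u + (2 * (k - 1) + 1)" if "u \<in> ?R" for u
    using that c_nd card_P by (auto simp: f_def)
  show ?thesis
  proof (rule that[OF bij])
    show "f c = 0" by (simp add: f_def)
    show "1 \<le> f u \<and> f u \<le> 2 * k - 2" if "u \<in> ?C" for u using f_C[OF that] by simp
    show "2 * k - 2 < f u" if "u \<in> ?R" for u using f_R[OF that] by simp
    show "(\<exists>e\<in>?P. u \<in> e \<and> v \<in> e) \<longleftrightarrow> (f u + 1) div 2 = (f v + 1) div 2"
      if "u \<in> ?C" "v \<in> ?C" for u v
    proof -
      have "(\<exists>e\<in>?P. u \<in> e \<and> v \<in> e) \<longleftrightarrow> p u div 2 = p v div 2" using same_pair that by blast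
      then show ?thesis using f_C(1)[OF that(1)] f_C(1)[OF that(2)] by simp
    qed
  qed
qed

context
  fixes M :: "'a set set" and c :: 'a and f :: "'a \<Rightarrow> nat" and n k :: nat
  assumes M: "is_matching E M" and tight: "inner_degree_sum = 2 * card (dominating_free M)"
    and c: "dominating = {c}" and f: "bij_betw f V {0..<n}" and f_c: "f c = 0"
    and f_C: "\<And>u. u \<in> \<Union>(dominating_free M) \<Longrightarrow> 1 \<le> f u \<and> f u \<le> 2 * k - 2"
    and f_R: "\<And>u. u \<in> non_dominating - \<Union>(dominating_free M) \<Longrightarrow> 2 * k - 2 < f u"
    and f_pair: "\<And>u v. u \<in> \<Union>(dominating_free M) \<Longrightarrow> v \<in> \<Union>(dominating_free M) \<Longrightarrow>
      (\<exists>e\<in>dominating_free M. u \<in> e \<and> v \<in> e) \<longleftrightarrow> (f u + 1) div 2 = (f v + 1) div 2"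
begin

lemma join_labelling_adj_centre:
  assumes v: "v \<in> V"
  shows "E c v \<longleftrightarrow> join_adj n k (f c) (f v)"
proof -
  have "c \<in> V" "c \<in> dominating" using c dominating_subset by auto
  then have "E c v \<longleftrightarrow> v \<noteq> c" using v adj_irrefl by (auto simp: dominating_def)
  also have "\<dots> \<longleftrightarrow> f v \<noteq> 0" using inj_on_eq_iff[OF bij_betw_imp_inj_on[OF f] v \<open>c \<in> V\<close>] f_c by simp
  finally show ?thesis using f_c bij_betw_apply[OF f v] by (simp add: join_adj_def)
qed

lemma join_labelling_non_dominating:
  assumes u: "u \<in> non_dominating"
  shows "u \<in> V" and "f u \<noteq> 0"
proof -
  show "u \<in> V" using u by (simp add: non_dominating_def)
  moreover have "u \<noteq> c" "c \<in> V" using u c dominating_subset by (auto simp: non_dominating_def)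
  ultimately show "f u \<noteq> 0" using inj_on_eq_iff[OF bij_betw_imp_inj_on[OF f]] f_c by metis
qed

lemma join_labelling_adj_non_dominating:
  assumes u: "u \<in> non_dominating" and v: "v \<in> non_dominating"
  shows "E u v \<longleftrightarrow> join_adj n k (f u) (f v)"
proof -
  note u' = join_labelling_non_dominating[OF u] and v' = join_labelling_non_dominating[OF v]
  have adj_iff: "E u v \<longleftrightarrow> (\<exists>e\<in>dominating_free M. u \<in> e \<and> v \<in> e) \<and> u \<noteq> v"
    using adj_non_dominating_iff_if_tight[OF M tight u v] by blast
  show ?thesis
  proof (cases "u \<in> \<Union>(dominating_free M) \<and> v \<in> \<Union>(dominating_free M)")
    case True
    then have "E u v \<longleftrightarrow> (f u + 1) div 2 = (f v + 1) div 2 \<and> f u \<noteq> f v"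
      using adj_iff f_pair[of u v] inj_on_eq_iff[OF bij_betw_imp_inj_on[OF f] u'(1) v'(1)] by simp
    then show ?thesis
      using True f_C[of u] f_C[of v] bij_betw_apply[OF f u'(1)] bij_betw_apply[OF f v'(1)] u' v'
      by (simp add: join_adj_def conj_commute)
  next
    case False
    then have "\<not> E u v" using adj_iff by blast
    moreover have "2 * k - 2 < f u \<or> 2 * k - 2 < f v" using False f_R u v by blast
    ultimately show ?thesis using u'(2) v'(2) by (auto simp: join_adj_def)
  qed
qed

lemma join_labelling_adj:
  assumes uv: "u \<in> V" "v \<in> V"
  shows "E u v \<longleftrightarrow> join_adj n k (f u) (f v)"
proof -
  consider "u = c" | "v = c" | "u \<in> non_dominating" "v \<in> non_dominating"
    using uv c by (auto simp: non_dominating_def)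
  then show ?thesis
  proof cases
    case 1
    then show ?thesis using join_labelling_adj_centre[OF uv(2)] by simp
  next
    case 2
    have "E u v \<longleftrightarrow> E v u" using adj_sym by blast
    also have "\<dots> \<longleftrightarrow> join_adj n k (f v) (f u)" using join_labelling_adj_centre[OF uv(1)] 2 by simp
    finally show ?thesis using join_adj_sym by blast
  next
    case 3
    then show ?thesis by (rule join_labelling_adj_non_dominating)
  qed
qed

end

lemma join_parameters_imp_graph_iso:
  assumes n: "card V = n" and k: "matching_number E = k"
    and card_dom: "card dominating = 1" and inner: "inner_degree_sum = 2 * (k - 1)"
  shows "graph_iso V E {0..<n} (join_adj n k)"
proof -
  obtain c where c: "dominating = {c}" using card_dom by (rule card_1_singletonE)
  obtain M where M: "is_matching E M" "card M = k" using exists_maximum_matching k by blast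
  have card_P: "card (dominating_free M) = k - 1"
    using card_le_card_dominating_free[OF M(1)] twice_card_dominating_free_le[OF M(1)]
      M(2) card_dom inner by linarith
  then have tight: "inner_degree_sum = 2 * card (dominating_free M)" using inner by simp
  obtain f where f: "bij_betw f V {0..<n}" and labelling: "f c = 0"
    "\<And>u. u \<in> \<Union>(dominating_free M) \<Longrightarrow> 1 \<le> f u \<and> f u \<le> 2 * k - 2"
    "\<And>u. u \<in> non_dominating - \<Union>(dominating_free M) \<Longrightarrow> 2 * k - 2 < f u"
    "\<And>u v. u \<in> \<Union>(dominating_free M) \<Longrightarrow> v \<in> \<Union>(dominating_free M) \<Longrightarrow>
      (\<exists>e\<in>dominating_free M. u \<in> e \<and> v \<in> e) \<longleftrightarrow> (f u + 1) div 2 = (f v + 1) div 2"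
    using exists_join_labelling[OF c M(1) card_P n] by blast
  show ?thesis
    unfolding graph_iso_def using f join_labelling_adj[OF M(1) tight c f labelling] by blast
qed

end

theorem theorem5p5:
  fixes V :: "'a set" and E :: "'a \<Rightarrow> 'a \<Rightarrow> bool" and n k :: nat
  assumes "simple_graph V E" and "connected_graph V E"
    and "card V = n" and "matching_number E = k"
    and "2 \<le> k" and "k \<le> n div 2"
  shows "(if 4 \<le> n \<and> n \<le> 6 \<and> k = n div 2
          then sigma2 V E \<ge> n choose 2 \<and>
               (sigma2 V E = n choose 2 \<longleftrightarrow> graph_iso V E {0..<n} (complete_adj n))
          else sigma2 V E \<ge> 2*n + 4*k - 6 \<and>
               (sigma2 V E = 2*n + 4*k - 6 \<longleftrightarrow> graph_iso V E {0..<n} (join_adj n k)))"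
proof -
  interpret connected_simple_graph V E using assms(1,2) by unfold_locales
  have k2n: "2 * k \<le> n" using assms(6) by linarith
  show ?thesis
  proof (cases "4 \<le> n \<and> n \<le> 6 \<and> k = n div 2")
    case True
    then have "n choose 2 \<le> sigma2 V E"
      and "sigma2 V E = n choose 2 \<longleftrightarrow> graph_iso V E {0..<n} (complete_adj n)"
      using sigma2_ge_choose_two[OF assms(3,4)] graph_iso_complete_iff[OF assms(3)] by simp_all
    then show ?thesis unfolding if_P[OF True] by blast
  next
    case False
    then have large: "\<not> (n \<le> 6 \<and> k = n div 2)" using assms(5) k2n by linarith
    note bound = sigma2_ge_linear[OF assms(3,4,5) k2n large]
    have "sigma2 V E = 2 * n + 4 * k - 6 \<longleftrightarrow> graph_iso V E {0..<n} (join_adj n k)"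
      using bound(2) join_parameters_imp_graph_iso[OF assms(3,4)]
        join_iso_imp_parameters[OF _ assms(5) k2n] by blast
    with bound(1) show ?thesis unfolding if_not_P[OF False] by blast
  qed
qed

end
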